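(* Let $d,k,\ell,T$ be positive integers with $2k\le d$, let $\mathbf{X}_1,\dots,\mathbf{X}_T\in\mathbb{R}^{d\times\ell}$ and $t_1,\dots,t_T\in(0,1]$. Let $(\mathbf{H}^{(n)},\mathbf{Y}^{(n)},\boldsymbol{\Theta}^{(n)})_{n\ge 0}$ be the iterates produced by the Geodesic Subspace Estimation algorithm (described in the context) from any initialization with $[\mathbf{H}^{(0)}\ \mathbf{Y}^{(0)}]\in\mathrm{St}(d,2k)$ and $\boldsymbol{\Theta}^{(0)}$ real diagonal, and let $\mathbf{U}^{(n)}(t)=\mathbf{H}^{(n)}\cos(\boldsymbol{\Theta}^{(n)}t)+\mathbf{Y}^{(n)}\sin(\boldsymbol{\Theta}^{(n)}t)$. Then for every $n\ge 1$, $$\mathcal{L}(\mathbf{U}^{(n)})\le \mathcal{L}(\mathbf{U}^{(n-1)}),$$ i.e. the loss is monotonically non-increasing along the iterates.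
   Context: $\mathrm{St}(d,p)=\{\mathbf{Q}\in\mathbb{R}^{d\times p}:\mathbf{Q}^\top\mathbf{Q}=\mathbf{I}_p\}$. For $\mathbf{H},\mathbf{Y}\in\mathbb{R}^{d\times k}$ and a real diagonal $k\times k$ matrix $\boldsymbol{\Theta}=\mathrm{diag}(\theta_1,\dots,\theta_k)$, set $\mathbf{U}(t)=\mathbf{H}\cos(\boldsymbol{\Theta}t)+\mathbf{Y}\sin(\boldsymbol{\Theta}t)$ (matrix cosine/sine of a diagonal matrix act entrywise on the diagonal) and define the loss $$\mathcal{L}(\mathbf{U})=\mathcal{L}(\mathbf{H},\mathbf{Y},\boldsymbol{\Theta})=-\sum_{i=1}^T\|\mathbf{X}_i^\top\mathbf{U}(t_i)\|_F^2$$ (which, when $[\mathbf{H}\ \mathbf{Y}]\in\mathrm{St}(d,2k)$, equals $\min_{\mathbf{G}_i}\sum_i\|\mathbf{X}_i-\mathbf{U}(t_i)\mathbf{G}_i\|_F^2$ minus the constant $\sum_i\|\mathbf{X}_i\|_F^2$). For $a\in\mathbb{R},p>0$, $\mathrm{mod}(a,p)=a-p\lfloor a/p\rfloor\in[0,p)$; $\arctan2(y,x)$ is the angle of $(x,y)$ measured counter-clockwise from the positive $x$-axis. Algorithm (Geodesic Subspace Estimation), with $M\ge1$ inner iterations. For $n=1,2,\dots$: (i) ($\mathbf{H},\mathbf{Y}$ update) Let $\mathbf{U}_i=\mathbf{U}^{(n-1)}(t_i)$, $\mathbf{G}_i=\mathbf{U}_i^\top\mathbf{X}_i$, $\mathbf{M}=\sum_{i=1}^T[\mathbf{X}_i\mathbf{G}_i^\top\cos(\boldsymbol{\Theta}^{(n-1)}t_i)\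 \ \mathbf{X}_i\mathbf{G}_i^\top\sin(\boldsymbol{\Theta}^{(n-1)}t_i)]\in\mathbb{R}^{d\times 2k}$, take a thin SVD $\mathbf{M}=\mathbf{W}\boldsymbol{\Sigma}\mathbf{V}^\top$ and set $[\mathbf{H}^{(n)}\ \mathbf{Y}^{(n)}]=\mathbf{W}\mathbf{V}^\top$. (ii) ($\boldsymbol{\Theta}$ update) With $\mathbf{H}=\mathbf{H}^{(n)},\mathbf{Y}=\mathbf{Y}^{(n)}$, for each $j=1,\dots,k$ and $i=1,\dots,T$ put $\alpha_{i,j}=[\mathbf{H}^\top\mathbf{X}_i\mathbf{X}_i^\top\mathbf{H}]_{jj}$, $\beta_{i,j}=[\mathbf{Y}^\top\mathbf{X}_i\mathbf{X}_i^\top\mathbf{H}]_{jj}$, $\gamma_{i,j}=[\mathbf{Y}^\top\mathbf{X}_i\mathbf{X}_i^\top\mathbf{Y}]_{jj}$, $\phi_{i,j}=\arctan2(\beta_{i,j},(\alpha_{i,j}-\gamma_{i,j})/2)$, $r_{i,j}=\sqrt{((\alpha_{i,j}-\gamma_{i,j})/2)^2+\beta_{i,j}^2}$. Define $f'_{i,j}(\theta)=2r_{i,j}t_i\sin(2\theta t_i-\phi_{i,j})$ and the curvature $w_{i,j}(\theta)=f'_{i,j}(\theta)\big/\big(\mathrm{mod}(\theta-\tfrac{\phi_{i,j}}{2t_i}+\tfrac{\pi}{2t_i},\tfrac{2\pi}{2t_i})-\tfrac{\pi}{2t_i}\big)$ when the denominator is nonzero, and $w_{i,j}(\theta)=4t_i^2r_{i,j}$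 when $\theta\in\{(\phi_{i,j}+2\pi m)/(2t_i):m\in\mathbb{Z}\}$. Starting from $\theta_j^{(n,0)}=\theta_j^{(n-1)}$, for $m=1,\dots,M$ set $\theta_j^{(n,m)}=\theta_j^{(n,m-1)}-\frac{\sum_i f'_{i,j}(\theta_j^{(n,m-1)})}{\sum_i w_{i,j}(\theta_j^{(n,m-1)})}$ (with the convention $\theta_j^{(n,m)}=\theta_j^{(n,m-1)}$ if the denominator is $0$). Finally $\boldsymbol{\Theta}^{(n)}=\mathrm{diag}(\theta_1^{(n,M)},\dots,\theta_k^{(n,M)})$. *)

theory Defs
  imports "HOL-Analysis.Analysis"
begin

text \<open>Dimensions d, k, l are finite
  index types 'd, 'k, 'l; the 2k columns of [H Y] are indexed by the sum type 'k + 'k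
  (Inl j = j-th column of H, Inr j = j-th column of Y).  The diagonal matrix Theta
  is represented by the vector of its diagonal entries.\<close>

definition fro_norm :: "real^'n^'m \<Rightarrow> real" where
  "fro_norm A = sqrt (\<Sum>i\<in>UNIV. \<Sum>j\<in>UNIV. (A$i$j)^2)"

definition rmod :: "real \<Rightarrow> real \<Rightarrow> real" where
  "rmod a p = a - p * of_int \<lfloor>a / p\<rfloor>"

definition arctan2 :: "real \<Rightarrow> real \<Rightarrow> real" where
  "arctan2 y x = Arg2pi (Complex x y)"

definition hcat :: "real^'k^'d \<Rightarrow> real^'k^'d \<Rightarrow> real^('k + 'k)^'d" where
  "hcat H Y = (\<chi> r c. case c of Inl j \<Rightarrow> H$r$j | Inr j \<Rightarrow> Y$r$j)"

definition left_block :: "real^('k + 'k)^'d \<Rightarrow> real^'k^'d" where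
  "left_block A = (\<chi> r j. A$r$(Inl j))"

definition right_block :: "real^('k + 'k)^'d \<Rightarrow> real^'k^'d" where
  "right_block A = (\<chi> r j. A$r$(Inr j))"

definition stiefel :: "real^'p^'d \<Rightarrow> bool" where
  "stiefel Q \<longleftrightarrow> transpose Q ** Q = mat 1"

definition cosd :: "real^'k \<Rightarrow> real \<Rightarrow> real^'k^'k" where
  "cosd \<theta> s = (\<chi> a b. if a = b then cos (\<theta>$a * s) else 0)"

definition sind :: "real^'k \<Rightarrow> real \<Rightarrow> real^'k^'k" where
  "sind \<theta> s = (\<chi> a b. if a = b then sin (\<theta>$a * s) else 0)"

definition U_at :: "real^'k^'d \<Rightarrow> real^'k^'d \<Rightarrow> real^'k \<Rightarrow> real \<Rightarrow> real^'k^'d" where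
  "U_at H Y \<theta> s = H ** cosd \<theta> s + Y ** sind \<theta> s"

definition gse_loss ::
  "nat \<Rightarrow> (nat \<Rightarrow> real^'l^'d) \<Rightarrow> (nat \<Rightarrow> real) \<Rightarrow> real^'k^'d \<Rightarrow> real^'k^'d \<Rightarrow> real^'k \<Rightarrow> real" where
  "gse_loss T X t H Y \<theta> = - (\<Sum>i<T. (fro_norm (transpose (X i) ** U_at H Y \<theta> (t i)))^2)"

definition gse_M ::
  "nat \<Rightarrow> (nat \<Rightarrow> real^'l^'d) \<Rightarrow> (nat \<Rightarrow> real) \<Rightarrow> real^'k^'d \<Rightarrow> real^'k^'d \<Rightarrow> real^'k \<Rightarrow> real^('k+'k)^'d" where
  "gse_M T X t H Y \<theta> =
     (\<Sum>i<T. let G = transpose (U_at H Y \<theta> (t i)) ** X i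
             in hcat (X i ** transpose G ** cosd \<theta> (t i)) (X i ** transpose G ** sind \<theta> (t i)))"

definition thin_svd :: "real^'p^'d \<Rightarrow> real^'p^'d \<Rightarrow> real^'p^'p \<Rightarrow> real^'p^'p \<Rightarrow> bool" where
  "thin_svd A W S V \<longleftrightarrow>
     transpose W ** W = mat 1 \<and> transpose V ** V = mat 1 \<and>
     (\<forall>a b. a \<noteq> b \<longrightarrow> S$a$b = 0) \<and> (\<forall>a. 0 \<le> S$a$a) \<and>
     A = W ** S ** transpose V"

definition alpha_ij :: "real^'k^'d \<Rightarrow> real^'l^'d \<Rightarrow> 'k \<Rightarrow> real" where
  "alpha_ij H Xi j = (transpose H ** Xi ** transpose Xi ** H)$j$j"
definition beta_ij :: "real^'k^'d \<Rightarrow> real^'k^'d \<Rightarrow> real^'l^'d \<Rightarrow> 'k \<Rightarrow> real" where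
  "beta_ij H Y Xi j = (transpose Y ** Xi ** transpose Xi ** H)$j$j"
definition gamma_ij :: "real^'k^'d \<Rightarrow> real^'l^'d \<Rightarrow> 'k \<Rightarrow> real" where
  "gamma_ij Y Xi j = (transpose Y ** Xi ** transpose Xi ** Y)$j$j"

definition phi_ij :: "real^'k^'d \<Rightarrow> real^'k^'d \<Rightarrow> real^'l^'d \<Rightarrow> 'k \<Rightarrow> real" where
  "phi_ij H Y Xi j = arctan2 (beta_ij H Y Xi j) ((alpha_ij H Xi j - gamma_ij Y Xi j) / 2)"
definition r_ij :: "real^'k^'d \<Rightarrow> real^'k^'d \<Rightarrow> real^'l^'d \<Rightarrow> 'k \<Rightarrow> real" where
  "r_ij H Y Xi j = sqrt (((alpha_ij H Xi j - gamma_ij Y Xi j) / 2)^2 + (beta_ij H Y Xi j)^2)"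

definition fprime :: "real \<Rightarrow> real \<Rightarrow> real \<Rightarrow> real \<Rightarrow> real" where
  "fprime r \<phi> ti \<theta> = 2 * r * ti * sin (2 * \<theta> * ti - \<phi>)"

text \<open>curvature w_{i,j}(theta); the denominator vanishes exactly when
  theta \<in> {(phi + 2 pi m)/(2 t) : m \<in> Z}\<close>
definition curv :: "real \<Rightarrow> real \<Rightarrow> real \<Rightarrow> real \<Rightarrow> real" where
  "curv r \<phi> ti \<theta> =
     (let den = rmod (\<theta> - \<phi> / (2 * ti) + pi / (2 * ti)) (2 * pi / (2 * ti)) - pi / (2 * ti)
      in if den = 0 then 4 * ti^2 * r else fprime r \<phi> ti \<theta> / den)"

definition theta_step ::
  "nat \<Rightarrow> (nat \<Rightarrow> real^'l^'d) \<Rightarrow> (nat \<Rightarrow> real) \<Rightarrow> real^'k^'d \<Rightarrow> real^'k^'d \<Rightarrow> 'k \<Rightarrow> real \<Rightarrow> real" where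
  "theta_step T X t H Y j \<theta> =
     (let num = (\<Sum>i<T. fprime (r_ij H Y (X i) j) (phi_ij H Y (X i) j) (t i) \<theta>);
          den = (\<Sum>i<T. curv (r_ij H Y (X i) j) (phi_ij H Y (X i) j) (t i) \<theta>)
      in if den = 0 then \<theta> else \<theta> - num / den)"

definition theta_update ::
  "nat \<Rightarrow> nat \<Rightarrow> (nat \<Rightarrow> real^'l^'d) \<Rightarrow> (nat \<Rightarrow> real) \<Rightarrow> real^'k^'d \<Rightarrow> real^'k^'d \<Rightarrow> real^'k \<Rightarrow> real^'k" where
  "theta_update M T X t H Y \<theta> = (\<chi> j. (theta_step T X t H Y j ^^ M) (\<theta>$j))"

text \<open>One outer iteration n-1 -> n of Geodesic Subspace Estimation (the thin SVD is any
  thin SVD of M).\<close>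
definition gse_step ::
  "nat \<Rightarrow> nat \<Rightarrow> (nat \<Rightarrow> real^'l^'d) \<Rightarrow> (nat \<Rightarrow> real) \<Rightarrow>
   real^'k^'d \<Rightarrow> real^'k^'d \<Rightarrow> real^'k \<Rightarrow> real^'k^'d \<Rightarrow> real^'k^'d \<Rightarrow> real^'k \<Rightarrow> bool" where
  "gse_step M T X t H0 Y0 \<theta>0 H1 Y1 \<theta>1 \<longleftrightarrow>
     (\<exists>W S V. thin_svd (gse_M T X t H0 Y0 \<theta>0) W S V \<and>
              hcat H1 Y1 = W ** transpose V) \<and>
     \<theta>1 = theta_update M T X t H1 Y1 \<theta>0"

end

theory Submission
  imports Defs
begin

text \<open>Both half-steps of the algorithm are majorize-minimize steps, so neither can increase the
  loss.  In step (i) the concave function -|B|^2 is majorized by its tangent |A|^2 - 2\<langle>A, B\<rangle>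
  at the current A = X_i^T U_i; summed over i, this majorizer of the loss is -2\<langle>M, [H Y]\<rangle> plus a
  constant, and the orthogonal Procrustes solution W V^T maximizes \<langle>M, [H Y]\<rangle> over St(d, 2k).
  In step (ii) the loss separates into independent functions of the \<theta>_j, each a sum of terms
  -r cos(2 \<theta> t - \<phi>).  The weight w is the curvature of the sharpest quadratic majorizer of such
  a term at the current point (this uses that sin x / x decreases on (0, pi]), so every inner
  iteration minimizes a quadratic majorizer.\<close>

section \<open>The update of H and Y\<close>

lemma fro_norm_power2: "(fro_norm A)^2 = (\<Sum>i\<in>UNIV. \<Sum>j\<in>UNIV. (A$i$j)^2)"
  unfolding fro_norm_def by (simp add: sum_nonneg)

definition frob_inner :: "real^'n^'m \<Rightarrow> real^'n^'m \<Rightarrow> real" where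
  "frob_inner A B = (\<Sum>i\<in>UNIV. \<Sum>j\<in>UNIV. A$i$j * B$i$j)"

lemma frob_inner_self: "frob_inner A A = (fro_norm A)^2"
  unfolding fro_norm_power2 frob_inner_def by (simp add: power2_eq_square)

lemma frob_inner_add_right: "frob_inner A (B + C) = frob_inner A B + frob_inner A C"
  by (simp add: frob_inner_def distrib_left sum.distrib)

lemma frob_inner_sum_left: "frob_inner (sum f S) C = (\<Sum>s\<in>S. frob_inner (f s) C)"
proof -
  have "frob_inner (sum f S) C = (\<Sum>i\<in>UNIV. \<Sum>j\<in>UNIV. \<Sum>s\<in>S. f s $ i $ j * C $ i $ j)"
    unfolding frob_inner_def sum_component sum_distrib_right ..
  also have "\<dots> = (\<Sum>i\<in>UNIV. \<Sum>s\<in>S. \<Sum>j\<in>UNIV. f s $ i $ j * C $ i $ j)"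
    by (rule sum.cong[OF refl], rule sum.swap)
  also have "\<dots> = (\<Sum>s\<in>S. \<Sum>i\<in>UNIV. \<Sum>j\<in>UNIV. f s $ i $ j * C $ i $ j)"
    by (rule sum.swap)
  finally show ?thesis unfolding frob_inner_def .
qed

lemma frob_inner_mult_left: "frob_inner (A ** B) C = frob_inner B (transpose A ** C)"
proof -
  have "frob_inner (A ** B) C = (\<Sum>i\<in>UNIV. \<Sum>j\<in>UNIV. \<Sum>k\<in>UNIV. A$i$k * B$k$j * C$i$j)"
    by (simp add: frob_inner_def matrix_matrix_mult_def sum_distrib_right)
  also have "\<dots> = (\<Sum>i\<in>UNIV. \<Sum>k\<in>UNIV. \<Sum>j\<in>UNIV. A$i$k * B$k$j * C$i$j)"
    by (rule sum.cong[OF refl], rule sum.swap)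
  also have "\<dots> = (\<Sum>k\<in>UNIV. \<Sum>i\<in>UNIV. \<Sum>j\<in>UNIV. A$i$k * B$k$j * C$i$j)"
    by (rule sum.swap)
  also have "\<dots> = (\<Sum>k\<in>UNIV. \<Sum>j\<in>UNIV. \<Sum>i\<in>UNIV. A$i$k * B$k$j * C$i$j)"
    by (rule sum.cong[OF refl], rule sum.swap)
  also have "\<dots> = frob_inner B (transpose A ** C)"
    by (simp add: frob_inner_def matrix_matrix_mult_def transpose_def sum_distrib_left mult_ac)
  finally show ?thesis .
qed

lemma frob_inner_mult_right: "frob_inner A (B ** C) = frob_inner (A ** transpose C) B"
proof -
  have "frob_inner A (B ** C) = (\<Sum>i\<in>UNIV. \<Sum>j\<in>UNIV. \<Sum>k\<in>UNIV. A$i$j * B$i$k * C$k$j)"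
    by (simp add: frob_inner_def matrix_matrix_mult_def sum_distrib_left mult_ac)
  also have "\<dots> = (\<Sum>i\<in>UNIV. \<Sum>k\<in>UNIV. \<Sum>j\<in>UNIV. A$i$j * B$i$k * C$k$j)"
    by (rule sum.cong[OF refl]) (rule sum.swap)
  also have "\<dots> = frob_inner (A ** transpose C) B"
    by (simp add: frob_inner_def matrix_matrix_mult_def transpose_def sum_distrib_right
        sum_distrib_left mult_ac)
  finally show ?thesis .
qed

lemma frob_inner_transpose_mult_mult:
  "frob_inner B (transpose Z ** (G ** D)) = frob_inner (Z ** B ** transpose D) G"
  unfolding frob_inner_mult_left[symmetric] by (rule frob_inner_mult_right)

lemma frob_inner_hcat: "frob_inner (hcat P Q) (hcat H Y) = frob_inner P H + frob_inner Q Y"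
  unfolding frob_inner_def hcat_def sum.distrib[symmetric]
  by (rule sum.cong[OF refl]) (simp add: sum.Plus[of UNIV UNIV, simplified] o_def sum.distrib)

lemma frob_inner_diag:
  assumes "\<forall>a b. a \<noteq> b \<longrightarrow> S$a$b = 0"
  shows "frob_inner S Z = (\<Sum>a\<in>UNIV. S$a$a * Z$a$a)"
  unfolding frob_inner_def
proof (rule sum.cong[OF refl])
  fix a
  have "(\<Sum>j\<in>UNIV. S$a$j * Z$a$j) = (\<Sum>j\<in>UNIV. if j = a then S$a$a * Z$a$a else 0)"
    by (rule sum.cong[OF refl]) (use assms in auto)
  then show "(\<Sum>j\<in>UNIV. S$a$j * Z$a$j) = S$a$a * Z$a$a" by simp
qed

lemma neg_frob_inner_self_le: "- frob_inner B B \<le> frob_inner A A - 2 * frob_inner A B"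
proof -
  have "frob_inner A A - 2 * frob_inner A B + frob_inner B B = (\<Sum>i\<in>UNIV. \<Sum>j\<in>UNIV. (A$i$j - B$i$j)^2)"
    by (simp add: frob_inner_def power2_eq_square algebra_simps sum.distrib sum_subtractf sum_distrib_left)
  also have "\<dots> \<ge> 0" by (intro sum_nonneg) auto
  finally show ?thesis by linarith
qed

lemma orthonormal_columns_diag_le_1:
  fixes A B :: "real^'p^'d"
  assumes "transpose A ** A = mat 1" "transpose B ** B = mat 1"
  shows "(transpose A ** B)$a$a \<le> 1"
proof -
  have norm1: "norm (column a Q) = 1" if "transpose Q ** Q = mat 1" for Q :: "real^'p^'d"
  proof -
    have "(transpose Q ** Q)$a$a = column a Q \<bullet> column a Q"
      by (simp add: matrix_mult_transpose_dot_column)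
    then have "column a Q \<bullet> column a Q = 1" using that by (simp add: mat_def)
    then show ?thesis by (simp add: norm_eq_sqrt_inner)
  qed
  have "(transpose A ** B)$a$a = column a A \<bullet> column a B"
    by (simp add: matrix_matrix_mult_def transpose_def column_def inner_vec_def mult.commute)
  also have "\<dots> \<le> norm (column a A) * norm (column a B)" by (rule norm_cauchy_schwarz)
  finally show ?thesis using norm1 assms by simp
qed

text \<open>Orthogonal Procrustes: for Q with orthonormal columns the diagonal of W^T Q V is bounded
  by 1, and S is nonnegative and diagonal.\<close>
lemma frob_inner_le_procrustes:
  fixes Q :: "real^'p^'d"
  assumes svd: "thin_svd A W S V" and Q: "transpose Q ** Q = mat 1"
  shows "frob_inner A Q \<le> frob_inner A (W ** transpose V)"
proof -
  from svd have W: "transpose W ** W = mat 1" and V: "transpose V ** V = mat 1"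
    and D: "\<forall>a b. a \<noteq> b \<longrightarrow> S$a$b = 0" and P: "\<forall>a. 0 \<le> S$a$a"
    and A: "A = W ** S ** transpose V" by (auto simp: thin_svd_def)
  have rotate: "frob_inner A B = (\<Sum>a\<in>UNIV. S$a$a * (transpose W ** (B ** V))$a$a)" for B
  proof -
    have "frob_inner A B = frob_inner (W ** S) (B ** V)"
      unfolding A by (rule frob_inner_mult_right[symmetric])
    also have "\<dots> = frob_inner S (transpose W ** (B ** V))" by (rule frob_inner_mult_left)
    finally show ?thesis unfolding frob_inner_diag[OF D] .
  qed
  have "transpose (Q ** V) ** (Q ** V) = transpose V ** (transpose Q ** Q) ** V"
    by (simp add: matrix_transpose_mul matrix_mul_assoc)
  then have QV: "transpose (Q ** V) ** (Q ** V) = mat 1" using Q V by simp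
  have "frob_inner A Q \<le> (\<Sum>a\<in>UNIV. S$a$a * 1)"
    unfolding rotate by (intro sum_mono mult_left_mono orthonormal_columns_diag_le_1[OF W QV] P[rule_format])
  also have "\<dots> = frob_inner A (W ** transpose V)"
  proof -
    have "transpose W ** (W ** transpose V ** V) = (transpose W ** W) ** (transpose V ** V)"
      by (simp add: matrix_mul_assoc)
    then have "transpose W ** (W ** transpose V ** V) = mat 1" using W V by simp
    then show ?thesis unfolding rotate by (simp add: mat_def)
  qed
  finally show ?thesis .
qed

lemma thin_svd_polar_stiefel:
  assumes "thin_svd A W S V"
  shows "stiefel (W ** transpose V)"
proof -
  from assms have W: "transpose W ** W = mat 1" and V: "transpose V ** V = mat 1"
    by (auto simp: thin_svd_def)
  then have "orthogonal_matrix V" by (simp add: orthogonal_matrix)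
  then have "V ** transpose V = mat 1" by (simp add: orthogonal_matrix_def)
  then have "V ** (transpose W ** W) ** transpose V = mat 1" using W by simp
  then show ?thesis
    by (simp add: stiefel_def matrix_transpose_mul matrix_mul_assoc transpose_transpose)
qed

lemma frob_inner_gse_M:
  "frob_inner (gse_M T X t H Y \<theta>) (hcat H' Y')
   = (\<Sum>i<T. frob_inner (transpose (X i) ** U_at H Y \<theta> (t i)) (transpose (X i) ** U_at H' Y' \<theta> (t i)))"
proof -
  define A where "A i = transpose (X i) ** U_at H Y \<theta> (t i)" for i
  have transpose_diag: "transpose (cosd \<theta> s) = cosd \<theta> s" "transpose (sind \<theta> s) = sind \<theta> s" for s
    by (simp_all add: transpose_def cosd_def sind_def vec_eq_iff eq_commute)
  have "frob_inner (gse_M T X t H Y \<theta>) (hcat H' Y') =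
     (\<Sum>i<T. frob_inner (X i ** A i ** cosd \<theta> (t i)) H' + frob_inner (X i ** A i ** sind \<theta> (t i)) Y')"
    unfolding gse_M_def frob_inner_sum_left Let_def A_def
    by (simp add: frob_inner_hcat matrix_transpose_mul transpose_transpose)
  also have "\<dots> = (\<Sum>i<T. frob_inner (A i) (transpose (X i) ** U_at H' Y' \<theta> (t i)))"
    by (rule sum.cong[OF refl])
      (simp only: U_at_def matrix_add_ldistrib frob_inner_add_right
        frob_inner_transpose_mult_mult transpose_diag)
  finally show ?thesis by (simp add: A_def)
qed

lemma gse_loss_procrustes_le:
  assumes svd: "thin_svd (gse_M T X t H Y \<theta>) W S V"
    and new: "hcat H' Y' = W ** transpose V"
    and old: "stiefel (hcat H Y)"
  shows "gse_loss T X t H' Y' \<theta> \<le> gse_loss T X t H Y \<theta>"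
proof -
  define A where "A i = transpose (X i) ** U_at H Y \<theta> (t i)" for i
  define B where "B i = transpose (X i) ** U_at H' Y' \<theta> (t i)" for i
  have "gse_loss T X t H' Y' \<theta> = (\<Sum>i<T. - frob_inner (B i) (B i))"
    by (simp add: gse_loss_def B_def frob_inner_self sum_negf)
  also have "\<dots> \<le> (\<Sum>i<T. frob_inner (A i) (A i) - 2 * frob_inner (A i) (B i))"
    by (intro sum_mono neg_frob_inner_self_le)
  also have "\<dots> = (\<Sum>i<T. frob_inner (A i) (A i)) - 2 * frob_inner (gse_M T X t H Y \<theta>) (hcat H' Y')"
    by (simp add: frob_inner_gse_M A_def B_def sum_subtractf sum_distrib_left)
  also have "\<dots> \<le> (\<Sum>i<T. frob_inner (A i) (A i)) - 2 * frob_inner (gse_M T X t H Y \<theta>) (hcat H Y)"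
    using frob_inner_le_procrustes[OF svd, of "hcat H Y"] old new by (simp add: stiefel_def)
  also have "\<dots> = gse_loss T X t H Y \<theta>"
    by (simp add: frob_inner_gse_M gse_loss_def A_def frob_inner_self)
  finally show ?thesis .
qed

section \<open>A sharp quadratic majorizer of the cosine\<close>

definition sinc :: "real \<Rightarrow> real" where
  "sinc v = (if v = 0 then 1 else sin v / v)"

lemma sinc_mult_self: "sinc v * v = sin v"
  by (simp add: sinc_def)

lemma sinc_minus: "sinc (- v) = sinc v"
  by (simp add: sinc_def)

lemma sinc_nonneg:
  assumes "\<bar>v\<bar> \<le> pi" shows "0 \<le> sinc v"
proof -
  have "0 \<le> sinc \<bar>v\<bar>"
    using sin_ge_zero[of "\<bar>v\<bar>"] assms by (simp add: sinc_def)
  then show ?thesis by (cases "0 \<le> v") (simp_all add: sinc_minus)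
qed

lemma sin_minus_mult_cos_nonneg:
  fixes s :: real assumes "0 \<le> s" "s \<le> pi"
  shows "0 \<le> sin s - s * cos s"
proof -
  have "(\<lambda>x. sin x - x * cos x) 0 \<le> (\<lambda>x. sin x - x * cos x) s"
  proof (rule DERIV_nonneg_imp_nondecreasing[OF assms(1)])
    fix x assume "0 \<le> x" "x \<le> s"
    have "DERIV (\<lambda>x. sin x - x * cos x) x :> x * sin x"
      by (auto intro!: derivative_eq_intros)
    moreover have "0 \<le> x * sin x"
      using sin_ge_zero[of x] \<open>0 \<le> x\<close> \<open>x \<le> s\<close> assms by simp
    ultimately show "\<exists>y. DERIV (\<lambda>x. sin x - x * cos x) x :> y \<and> 0 \<le> y" by blast
  qed
  then show ?thesis by simp
qed

lemma sin_div_antimono: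
  fixes s s' :: real assumes "0 < s" "s \<le> s'" "s' \<le> pi"
  shows "sin s' / s' \<le> sin s / s"
proof -
  have "(\<lambda>x. sin x / x) s' \<le> (\<lambda>x. sin x / x) s"
  proof (rule DERIV_nonpos_imp_nonincreasing[OF assms(2)])
    fix x assume x: "s \<le> x" "x \<le> s'"
    have "DERIV (\<lambda>x. sin x / x) x :> (cos x * x - sin x * 1) / (x * x)"
      using x assms by (auto intro!: derivative_eq_intros)
    moreover have "(cos x * x - sin x * 1) / (x * x) \<le> 0"
      using sin_minus_mult_cos_nonneg[of x] x assms
      by (intro divide_nonpos_nonneg) (auto simp: algebra_simps)
    ultimately show "\<exists>y. DERIV (\<lambda>x. sin x / x) x :> y \<and> y \<le> 0" by blast
  qed
  then show ?thesis by simp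
qed

text \<open>The parabola touching cos at v (and, by symmetry, at -v) stays below it: the derivative
  sinc v * x - sin x changes sign only at v on [0, pi], because sin x / x is decreasing there.\<close>
lemma cos_quadratic_minorant_pos:
  fixes u v :: real assumes v: "0 < v" "v \<le> pi"
  shows "cos v + sinc v * v^2 / 2 \<le> cos u + sinc v * u^2 / 2"
proof -
  define c where "c = sin v / v"
  define f where "f x = cos x + c * x^2 / 2" for x
  have c: "sinc v = c" using v by (simp add: sinc_def c_def)
  have f': "DERIV f x :> c * x - sin x" for x
    unfolding f_def by (auto intro!: derivative_eq_intros)
  have left: "f v \<le> f x" if "0 \<le> x" "x \<le> v" for x
  proof (rule DERIV_nonpos_imp_nonincreasing[OF that(2)])
    fix y assume y: "x \<le> y" "y \<le> v"
    have "c * y \<le> sin y"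
    proof (cases "y = 0")
      case False
      then have "0 < y" using y that by simp
      then have "c \<le> sin y / y" using sin_div_antimono[of y v] y v by (simp add: c_def)
      then show ?thesis using \<open>0 < y\<close> by (simp add: pos_le_divide_eq)
    qed simp
    then show "\<exists>d. DERIV f y :> d \<and> d \<le> 0" using f'[of y] by auto
  qed
  have right: "f v \<le> f x" if "v \<le> x" "x \<le> pi" for x
  proof (rule DERIV_nonneg_imp_nondecreasing[OF that(1)])
    fix y assume y: "v \<le> y" "y \<le> x"
    then have "sin y / y \<le> c" using sin_div_antimono[of v y] v that by (simp add: c_def)
    then have "sin y \<le> c * y" using y v by (simp add: pos_divide_le_eq)
    then show "\<exists>d. DERIV f y :> d \<and> 0 \<le> d" using f'[of y] by auto
  qed
  have far: "f v \<le> f x" if "pi < x" for x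
  proof -
    have "pi^2 \<le> x^2" using that pi_gt_zero by (intro power_mono) auto
    moreover have "0 \<le> c" using sinc_nonneg[of v] v c by simp
    ultimately have "c * pi^2 \<le> c * x^2" by (rule mult_left_mono)
    then have "f pi \<le> f x" unfolding f_def cos_pi using cos_ge_minus_one[of x] by linarith
    then show ?thesis using right[of pi] v by simp
  qed
  have "f v \<le> f \<bar>u\<bar>"
  proof -
    consider "\<bar>u\<bar> \<le> v" | "v \<le> \<bar>u\<bar>" "\<bar>u\<bar> \<le> pi" | "pi < \<bar>u\<bar>" by linarith
    then show ?thesis using left right far by cases auto
  qed
  then show ?thesis by (simp add: f_def c)
qed

lemma cos_quadratic_minorant:
  fixes u v :: real assumes "\<bar>v\<bar> \<le> pi"
  shows "cos v + sinc v * v^2 / 2 \<le> cos u + sinc v * u^2 / 2"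
proof (cases v "0::real" rule: linorder_cases)
  case less
  then show ?thesis
    using cos_quadratic_minorant_pos[of "- v" u] assms by (simp add: sinc_minus)
next
  case equal
  have "sin (u / 2)^2 \<le> (u / 2)^2"
    using abs_sin_x_le_abs_x[of "u / 2"] by (metis abs_ge_zero power2_abs power_mono)
  moreover have "cos u = 1 - 2 * sin (u / 2)^2"
    using cos_double_sin[of "u / 2"] by simp
  ultimately show ?thesis using equal by (simp add: sinc_def power_divide)
next
  case greater
  then show ?thesis using cos_quadratic_minorant_pos[of v u] assms by simp
qed

lemma neg_cos_le_quadratic:
  fixes u v :: real assumes "\<bar>v\<bar> \<le> pi"
  shows "- cos u \<le> - cos v + sin v * (u - v) + sinc v / 2 * (u - v)^2"
proof -
  have "sinc v * u^2 / 2 = sinc v * v^2 / 2 + (sinc v * v) * (u - v) + sinc v / 2 * (u - v)^2"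
    by (simp add: power2_eq_square algebra_simps)
  then show ?thesis
    using cos_quadratic_minorant[OF assms, of u] unfolding sinc_mult_self by linarith
qed

text \<open>The denominator of curv is (2 t)^-1 times the representative in [-pi, pi) of the phase
  2 \<theta> t - \<phi> modulo 2 pi, so curv is the curvature 4 t^2 r sinc v of the sharp quadratic
  majorizer at that representative v.\<close>
lemma curv_eq_sinc:
  assumes ti: "0 < ti"
  obtains k :: int where "\<bar>2 * \<theta> * ti - \<phi> - 2 * pi * k\<bar> \<le> pi"
    and "curv r \<phi> ti \<theta> = 4 * ti^2 * r * sinc (2 * \<theta> * ti - \<phi> - 2 * pi * k)"
proof -
  define x where "x = \<theta> - \<phi> / (2 * ti) + pi / (2 * ti)"
  define p where "p = 2 * pi / (2 * ti)"
  define k where "k = \<lfloor>x / p\<rfloor>"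
  define den where "den = rmod x p - pi / (2 * ti)"
  define v where "v = 2 * \<theta> * ti - \<phi> - 2 * pi * k"
  have p: "0 < p" "2 * ti * p = 2 * pi" using ti by (simp_all add: p_def)
  have "p * k \<le> x" "x < p * k + p"
    using floor_divide_lower[OF p(1), of x] floor_divide_upper[OF p(1), of x]
    by (simp_all add: k_def algebra_simps)
  then have "2 * ti * (p * k) \<le> 2 * ti * x" "2 * ti * x < 2 * ti * (p * k + p)"
    using ti by simp_all
  moreover have "2 * ti * x = 2 * \<theta> * ti - \<phi> + pi"
    using ti by (simp add: x_def field_simps)
  ultimately have v_bound: "\<bar>v\<bar> \<le> pi"
    unfolding v_def distrib_left mult.assoc[symmetric] p(2) by linarith
  have "den = x - p * k - pi / (2 * ti)" by (simp add: den_def rmod_def k_def)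
  also have "\<dots> = v / (2 * ti)" using ti by (simp add: x_def p_def v_def field_simps)
  finally have den: "den = v / (2 * ti)" .
  have curv: "curv r \<phi> ti \<theta> = (if den = 0 then 4 * ti^2 * r else fprime r \<phi> ti \<theta> / den)"
    by (simp add: curv_def Let_def den_def x_def p_def)
  have "sin (2 * \<theta> * ti - \<phi>) = sin v"
    by (simp add: v_def sin_diff)
  then have "curv r \<phi> ti \<theta> = 4 * ti^2 * r * sinc v"
    using ti unfolding curv den
    by (cases "v = 0") (simp_all add: sinc_def fprime_def power2_eq_square)
  with v_bound show thesis unfolding v_def by (rule that)
qed

lemma curv_nonneg:
  assumes "0 \<le> r" "0 < ti" shows "0 \<le> curv r \<phi> ti \<theta>"
proof -
  obtain k :: int where "\<bar>2 * \<theta> * ti - \<phi> - 2 * pi * k\<bar> \<le> pi"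
    and "curv r \<phi> ti \<theta> = 4 * ti^2 * r * sinc (2 * \<theta> * ti - \<phi> - 2 * pi * k)"
    using curv_eq_sinc[OF assms(2)] .
  then show ?thesis using sinc_nonneg assms(1) by simp
qed

lemma neg_cos_le_curv_majorizer:
  assumes r: "0 \<le> r" and ti: "0 < ti"
  shows "- r * cos (2 * \<theta>' * ti - \<phi>) \<le> - r * cos (2 * \<theta> * ti - \<phi>)
           + fprime r \<phi> ti \<theta> * (\<theta>' - \<theta>) + curv r \<phi> ti \<theta> / 2 * (\<theta>' - \<theta>)^2"
proof -
  obtain k :: int where v_bound: "\<bar>2 * \<theta> * ti - \<phi> - 2 * pi * k\<bar> \<le> pi"
    and curv: "curv r \<phi> ti \<theta> = 4 * ti^2 * r * sinc (2 * \<theta> * ti - \<phi> - 2 * pi * k)"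
    using curv_eq_sinc[OF ti] .
  define v where "v = 2 * \<theta> * ti - \<phi> - 2 * pi * k"
  define u where "u = 2 * \<theta>' * ti - \<phi> - 2 * pi * k"
  have periodic: "cos (2 * \<theta>' * ti - \<phi>) = cos u" "cos (2 * \<theta> * ti - \<phi>) = cos v"
    "sin (2 * \<theta> * ti - \<phi>) = sin v"
    by (simp_all add: u_def v_def cos_diff sin_diff)
  have "u - v = 2 * ti * (\<theta>' - \<theta>)" by (simp add: u_def v_def algebra_simps)
  then have "- cos u \<le> - cos v + sin v * (2 * ti * (\<theta>' - \<theta>))
               + sinc v / 2 * (2 * ti * (\<theta>' - \<theta>))^2"
    using neg_cos_le_quadratic[of v u] v_bound by (simp add: v_def)
  from mult_left_mono[OF this r] show ?thesis
    unfolding periodic fprime_def curv v_def[symmetric]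
    by (simp add: power2_eq_square algebra_simps)
qed

section \<open>The update of \<theta>\<close>

text \<open>For w = 0 the step is x - a / 0 = x, so no positivity of w is needed.\<close>
lemma quadratic_majorizer_step_le:
  fixes g :: "real \<Rightarrow> real"
  assumes maj: "\<And>y. g y \<le> g x + a * (y - x) + w / 2 * (y - x)^2" and "0 \<le> w"
  shows "g (x - a / w) \<le> g x"
proof (cases "w = 0")
  case False
  then have "g x + a * (x - a / w - x) + w / 2 * (x - a / w - x)^2 = g x - a^2 / (2 * w)"
    by (simp add: power2_eq_square field_simps)
  also have "\<dots> \<le> g x" using \<open>0 \<le> w\<close> by simp
  finally show ?thesis using maj[of "x - a / w"] by linarith
qed simp

definition theta_objective ::
  "nat \<Rightarrow> (nat \<Rightarrow> real^'l^'d) \<Rightarrow> (nat \<Rightarrow> real) \<Rightarrow> real^'k^'d \<Rightarrow> real^'k^'d \<Rightarrow> 'k \<Rightarrow> real \<Rightarrow> real" where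
  "theta_objective T X t H Y j \<theta> = (\<Sum>i<T. - r_ij H Y (X i) j * cos (2 * \<theta> * t i - phi_ij H Y (X i) j))"

lemma r_ij_nonneg: "0 \<le> r_ij H Y Xi j"
  by (simp add: r_ij_def)

lemma theta_step_le:
  assumes t: "\<forall>i<T. 0 < t i"
  shows "theta_objective T X t H Y j (theta_step T X t H Y j \<theta>) \<le> theta_objective T X t H Y j \<theta>"
proof -
  let ?r = "\<lambda>i. r_ij H Y (X i) j" and ?\<phi> = "\<lambda>i. phi_ij H Y (X i) j"
  define a where "a = (\<Sum>i<T. fprime (?r i) (?\<phi> i) (t i) \<theta>)"
  define w where "w = (\<Sum>i<T. curv (?r i) (?\<phi> i) (t i) \<theta>)"
  have "theta_step T X t H Y j \<theta> = \<theta> - a / w"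
    by (simp add: theta_step_def Let_def a_def w_def)
  moreover have "theta_objective T X t H Y j \<theta>' \<le>
      theta_objective T X t H Y j \<theta> + a * (\<theta>' - \<theta>) + w / 2 * (\<theta>' - \<theta>)^2" for \<theta>'
    unfolding theta_objective_def a_def w_def sum_distrib_right sum_divide_distrib
      sum.distrib[symmetric]
    using t by (intro sum_mono neg_cos_le_curv_majorizer r_ij_nonneg) simp
  moreover have "0 \<le> w"
    unfolding w_def using t by (intro sum_nonneg curv_nonneg r_ij_nonneg) simp
  ultimately show ?thesis
    using quadratic_majorizer_step_le[where g = "theta_objective T X t H Y j"] by simp
qed

lemma theta_step_funpow_le:
  assumes "\<forall>i<T. 0 < t i"
  shows "theta_objective T X t H Y j ((theta_step T X t H Y j ^^ m) \<theta>) \<le> theta_objective T X t H Y j \<theta>"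
proof (induction m)
  case (Suc m)
  then show ?case
    using theta_step_le[OF assms, of X H Y j "(theta_step T X t H Y j ^^ m) \<theta>"] by simp
qed simp

lemma matrix_mult_cosd_entry: "(H ** cosd \<theta> s)$r$j = H$r$j * cos (\<theta>$j * s)"
  by (simp add: matrix_matrix_mult_def cosd_def if_distrib if_distribR cong: if_cong)

lemma matrix_mult_sind_entry: "(H ** sind \<theta> s)$r$j = H$r$j * sin (\<theta>$j * s)"
  by (simp add: matrix_matrix_mult_def sind_def if_distrib if_distribR cong: if_cong)

lemma transpose_mult_U_at_entry:
  "(transpose Xi ** U_at H Y \<theta> s)$l$j =
     (transpose Xi ** H)$l$j * cos (\<theta>$j * s) + (transpose Xi ** Y)$l$j * sin (\<theta>$j * s)"
  by (simp add: U_at_def matrix_add_ldistrib matrix_mul_assoc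
      matrix_mult_cosd_entry matrix_mult_sind_entry)

lemma transpose_mult_entry: "(transpose A ** B)$a$b = (\<Sum>r\<in>UNIV. A$r$a * B$r$b)"
  by (simp add: matrix_matrix_mult_def transpose_def)

lemma gram_transpose_mult:
  fixes A :: "real^'k^'d"
  shows "transpose A ** Xi ** transpose Xi ** B = transpose (transpose Xi ** A) ** (transpose Xi ** B)"
  by (simp add: matrix_transpose_mul matrix_mul_assoc transpose_transpose)

lemma alpha_ij_eq_sum: "alpha_ij H Xi j = (\<Sum>l\<in>UNIV. ((transpose Xi ** H)$l$j)^2)"
  by (simp add: alpha_ij_def gram_transpose_mult transpose_mult_entry power2_eq_square)

lemma gamma_ij_eq_sum: "gamma_ij Y Xi j = (\<Sum>l\<in>UNIV. ((transpose Xi ** Y)$l$j)^2)"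
  by (simp add: gamma_ij_def gram_transpose_mult transpose_mult_entry power2_eq_square)

lemma beta_ij_eq_sum: "beta_ij H Y Xi j = (\<Sum>l\<in>UNIV. (transpose Xi ** Y)$l$j * (transpose Xi ** H)$l$j)"
  by (simp add: beta_ij_def gram_transpose_mult transpose_mult_entry)

lemma arctan2_polar:
  "sqrt (x^2 + y^2) * cos (arctan2 y x) = x" "sqrt (x^2 + y^2) * sin (arctan2 y x) = y"
  using cos_Arg2pi[of "Complex x y"] sin_Arg2pi[of "Complex x y"]
  by (simp_all add: arctan2_def complex_norm)

text \<open>With c = cos(\<theta> s) and s' = sin(\<theta> s), the column norm is the quadratic form
  \<alpha> c^2 + 2 \<beta> c s' + \<gamma> s'^2 = (\<alpha> + \<gamma>)/2 + (\<alpha> - \<gamma>)/2 cos(2\<theta>s) + \<beta> sin(2\<theta>s),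
  and (r, \<phi>) are the polar coordinates of ((\<alpha> - \<gamma>)/2, \<beta>).\<close>
lemma column_sum_sq_U_at:
  "(\<Sum>l\<in>UNIV. ((transpose Xi ** U_at H Y \<theta> s)$l$j)^2) =
     (alpha_ij H Xi j + gamma_ij Y Xi j) / 2 + r_ij H Y Xi j * cos (2 * \<theta>$j * s - phi_ij H Y Xi j)"
proof -
  define c where "c = cos (\<theta>$j * s)"
  define sn where "sn = sin (\<theta>$j * s)"
  define a where "a = alpha_ij H Xi j"
  define b where "b = beta_ij H Y Xi j"
  define g where "g = gamma_ij Y Xi j"
  have "(\<Sum>l\<in>UNIV. ((transpose Xi ** U_at H Y \<theta> s)$l$j)^2)
     = (\<Sum>l\<in>UNIV. ((transpose Xi ** H)$l$j)^2 * c^2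
          + 2 * c * sn * ((transpose Xi ** Y)$l$j * (transpose Xi ** H)$l$j)
          + ((transpose Xi ** Y)$l$j)^2 * sn^2)"
    by (rule sum.cong) (simp_all add: transpose_mult_U_at_entry c_def sn_def power2_eq_square algebra_simps)
  also have "\<dots> = a * c^2 + 2 * c * sn * b + g * sn^2"
    by (simp add: sum.distrib sum_distrib_left sum_distrib_right a_def b_def g_def
        alpha_ij_eq_sum beta_ij_eq_sum gamma_ij_eq_sum)
  also have "\<dots> = (a + g) / 2 * (c^2 + sn^2) + (c^2 - sn^2) * ((a - g) / 2) + 2 * sn * c * b"
    by (simp add: field_simps)
  also have "\<dots> = (a + g) / 2 + r_ij H Y Xi j * cos (2 * \<theta>$j * s - phi_ij H Y Xi j)"
  proof -
    have double: "cos (2 * \<theta>$j * s) = c^2 - sn^2" "sin (2 * \<theta>$j * s) = 2 * sn * c"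
      using cos_double[of "\<theta>$j * s"] sin_double[of "\<theta>$j * s"]
      by (simp_all add: c_def sn_def mult.assoc)
    have polar: "r_ij H Y Xi j * cos (phi_ij H Y Xi j) = (a - g) / 2"
      "r_ij H Y Xi j * sin (phi_ij H Y Xi j) = b"
      using arctan2_polar[of "(a - g) / 2" b] by (simp_all add: r_ij_def phi_ij_def a_def b_def g_def)
    have "r_ij H Y Xi j * cos (2 * \<theta>$j * s - phi_ij H Y Xi j)
        = cos (2 * \<theta>$j * s) * (r_ij H Y Xi j * cos (phi_ij H Y Xi j))
          + sin (2 * \<theta>$j * s) * (r_ij H Y Xi j * sin (phi_ij H Y Xi j))"
      by (simp add: cos_diff algebra_simps)
    then show ?thesis by (simp add: double polar c_def sn_def)
  qed
  finally show ?thesis by (simp add: a_def g_def)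
qed

lemma gse_loss_eq_theta_objective:
  "gse_loss T X t H Y \<theta> =
     (\<Sum>j\<in>UNIV. \<Sum>i<T. - (alpha_ij H (X i) j + gamma_ij Y (X i) j) / 2)
     + (\<Sum>j\<in>UNIV. theta_objective T X t H Y j (\<theta>$j))"
proof -
  have "gse_loss T X t H Y \<theta> =
      - (\<Sum>i<T. \<Sum>j\<in>UNIV. \<Sum>l\<in>UNIV. ((transpose (X i) ** U_at H Y \<theta> (t i))$l$j)^2)"
    unfolding gse_loss_def fro_norm_power2 by (subst sum.swap[of _ UNIV UNIV]) (rule refl)
  also have "\<dots> = - (\<Sum>i<T. \<Sum>j\<in>UNIV. (alpha_ij H (X i) j + gamma_ij Y (X i) j) / 2
     + r_ij H Y (X i) j * cos (2 * \<theta>$j * t i - phi_ij H Y (X i) j))"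
    by (simp only: column_sum_sq_U_at)
  also have "\<dots> = (\<Sum>j\<in>UNIV. \<Sum>i<T. - (alpha_ij H (X i) j + gamma_ij Y (X i) j) / 2)
     + (\<Sum>j\<in>UNIV. theta_objective T X t H Y j (\<theta>$j))"
    unfolding theta_objective_def sum_negf[symmetric] sum.distrib[symmetric]
    by (subst sum.swap) (intro sum.cong refl; simp add: field_simps)
  finally show ?thesis .
qed

lemma gse_loss_theta_update_le:
  assumes "\<forall>i<T. 0 < t i"
  shows "gse_loss T X t H Y (theta_update M T X t H Y \<theta>) \<le> gse_loss T X t H Y \<theta>"
  unfolding gse_loss_eq_theta_objective theta_update_def vec_lambda_beta
  by (intro add_left_mono sum_mono theta_step_funpow_le[OF assms])

section \<open>Monotonicity of the loss\<close>

lemma gse_step_stiefel: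
  assumes "gse_step M T X t H Y \<theta> H' Y' \<theta>'"
  shows "stiefel (hcat H' Y')"
  using assms thin_svd_polar_stiefel by (auto simp: gse_step_def)

lemma gse_step_loss_le:
  assumes t: "\<forall>i<T. 0 < t i" and old: "stiefel (hcat H Y)"
    and step: "gse_step M T X t H Y \<theta> H' Y' \<theta>'"
  shows "gse_loss T X t H' Y' \<theta>' \<le> gse_loss T X t H Y \<theta>"
proof -
  obtain W S V where svd: "thin_svd (gse_M T X t H Y \<theta>) W S V"
    and new: "hcat H' Y' = W ** transpose V" and \<theta>': "\<theta>' = theta_update M T X t H' Y' \<theta>"
    using step by (auto simp: gse_step_def)
  have "gse_loss T X t H' Y' \<theta>' \<le> gse_loss T X t H' Y' \<theta>"
    unfolding \<theta>' by (rule gse_loss_theta_update_le[OF t])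
  also have "\<dots> \<le> gse_loss T X t H Y \<theta>"
    by (rule gse_loss_procrustes_le[OF svd new old])
  finally show ?thesis .
qed

theorem theorem1:
  fixes X :: "nat \<Rightarrow> real^'l::finite^'d::finite"
    and t :: "nat \<Rightarrow> real"
    and H Y :: "nat \<Rightarrow> real^'k::finite^'d"
    and \<theta> :: "nat \<Rightarrow> real^'k"
    and T M :: nat
  assumes "2 * CARD('k) \<le> CARD('d)"
    and "1 \<le> T"
    and "1 \<le> M"
    and "\<forall>i<T. 0 < t i \<and> t i \<le> 1"
    and "stiefel (hcat (H 0) (Y 0))"
    and "\<forall>n\<ge>1. gse_step M T X t (H (n - 1)) (Y (n - 1)) (\<theta> (n - 1)) (H n) (Y n) (\<theta> n)"
  shows "\<forall>n\<ge>1. gse_loss T X t (H n) (Y n) (\<theta> n) \<le> gse_loss T X t (H (n - 1)) (Y (n - 1)) (\<theta> (n - 1))"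
proof (intro allI impI)
  fix n :: nat assume "1 \<le> n"
  have "\<forall>i<T. 0 < t i" using assms(4) by simp
  moreover have "stiefel (hcat (H (n - 1)) (Y (n - 1)))"
  proof (cases "n - 1")
    case 0
    then show ?thesis using assms(5) by simp
  next
    case (Suc m)
    then show ?thesis using gse_step_stiefel[OF assms(6)[rule_format, of "n - 1"]] by simp
  qed
  moreover have "gse_step M T X t (H (n - 1)) (Y (n - 1)) (\<theta> (n - 1)) (H n) (Y n) (\<theta> n)"
    using assms(6) \<open>1 \<le> n\<close> by simp
  ultimately show "gse_loss T X t (H n) (Y n) (\<theta> n) \<le> gse_loss T X t (H (n - 1)) (Y (n - 1)) (\<theta> (n - 1))"
    by (rule gse_step_loss_le)
qed

end
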